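(* Let $S$ be a finite set, $n\ge 2$, and $R_1,\dots,R_n$ finite sets of words on $S\cup S^{-1}$; let $\tilde R=[R_n^{S_0},[R_{n-1}^{S_0},\dots[R_2^{S_0},R_1]\dots]]$. Let $\varphi:F(S)\to\mathbb F$ be a homomorphism to a non-abelian free group $\mathbb F$ with non-abelian image. Then $\varphi$ is trivial on every element of $\tilde R$ if and only if there is some $i$ such that $\varphi$ is trivial on every element of $R_i$.
   Context: $F(S)$ is the free group on $S$. $S_0=S\cup\{1\}$; for sets $R,R'$ of words on $S\cup S^{-1}$, $R^{S_0}$ is the set of words obtained by conjugating elements of $R$ by elements of $S_0$, and $[R^{S_0},R']$ is the set of commutators $[u,v]$ with $u\in R^{S_0}$, $v\in R'$. *)

theory Defs
  imports "HOL-Algebra.Group"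
begin

text \<open>Letters of S \<union> S^-1: (s, True) stands for s, (s, False) for s^-1.\<close>
type_synonym 'a letter = "'a \<times> bool"
type_synonym 'a word = "'a letter list"

definition words_on :: "'a set \<Rightarrow> 'a word set" where
  "words_on S = {w. fst ` set w \<subseteq> S}"

fun inv_letter :: "'a letter \<Rightarrow> 'a letter" where
  "inv_letter (a, b) = (a, \<not> b)"

definition inv_word :: "'a word \<Rightarrow> 'a word" where
  "inv_word w = rev (map inv_letter w)"

fun cancel_push :: "'a letter \<Rightarrow> 'a word \<Rightarrow> 'a word" where
  "cancel_push x [] = [x]"
| "cancel_push x (y # ys) = (if y = inv_letter x then ys else x # y # ys)"

definition reduce :: "'a word \<Rightarrow> 'a word" where
  "reduce w = foldr cancel_push w []"

fun reduced :: "'a word \<Rightarrow> bool" where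
  "reduced [] = True"
| "reduced [x] = True"
| "reduced (x # y # ys) = (y \<noteq> inv_letter x \<and> reduced (y # ys))"

definition free_group :: "'a set \<Rightarrow> 'a word monoid" where
  "free_group S = \<lparr>carrier = {w \<in> words_on S. reduced w},
                   mult = (\<lambda>u v. reduce (u @ v)),
                   one = []\<rparr>"

text \<open>R^{S_0}: conjugates of words of R by elements of S_0 = S \<union> {1}, with u^s = s^-1 u s.\<close>
definition conj_S0 :: "'a set \<Rightarrow> 'a word set \<Rightarrow> 'a word set" where
  "conj_S0 S R = R \<union> {[(s, False)] @ r @ [(s, True)] | s r. s \<in> S \<and> r \<in> R}"

definition commutator_word :: "'a word \<Rightarrow> 'a word \<Rightarrow> 'a word" where
  "commutator_word u v = inv_word u @ inv_word v @ u @ v"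

definition comm_set :: "'a word set \<Rightarrow> 'a word set \<Rightarrow> 'a word set" where
  "comm_set A B = {commutator_word u v | u v. u \<in> A \<and> v \<in> B}"

text \<open>nested_comm S R k = [R_k^{S_0}, [R_{k-1}^{S_0}, ... [R_2^{S_0}, R_1] ...]] for k \<ge> 1.\<close>
fun nested_comm :: "'a set \<Rightarrow> (nat \<Rightarrow> 'a word set) \<Rightarrow> nat \<Rightarrow> 'a word set" where
  "nested_comm S R 0 = R 1"
| "nested_comm S R (Suc 0) = R 1"
| "nested_comm S R (Suc (Suc k)) =
     comm_set (conj_S0 S (R (Suc (Suc k)))) (nested_comm S R (Suc k))"

end

theory Submission
  imports Defs "HOL-Algebra.Multiplicative_Group"
begin

(* Write val w = phi (reduce w) for the value of a word w.
   By induction on the depth of nesting this reduces to one step: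
   val kills [R^S0, B] iff it kills R or B.
   For the forward one, if val r <> 1 for some r in R and X = val w <> 1 for
   some w in B, then X commutes with the value of every conjugate of r by a
   letter of S_0, and this forces the whole image of phi to be abelian.

   The last implication uses two facts about a free group F:
   (1) the centraliser of every nontrivial element of F is infinite cyclic;
       this is proved by combinatorics on words (a reduced word is a conjugate
       of a cyclically reduced word z, and a word commuting with z is a power
       of the primitive root of z);
   (2) in every group with property (1), commutation is transitive on
       nontrivial elements, and g <> 1 commuting with its conjugate t^-1 g t
       must commute with t. *)


section \<open>Free reduction\<close>

lemma inv_letter_inv [simp]: "inv_letter (inv_letter x) = x"
  by (cases x) auto

lemma inv_letter_neq [simp]: "inv_letter x \<noteq> x" "x \<noteq> inv_letter x"
  by (cases x, auto)+

lemma inv_word_inv [simp]: "inv_word (inv_word w) = w"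
  by (simp add: inv_word_def rev_map comp_def)

lemma inv_word_append [simp]: "inv_word (u @ v) = inv_word v @ inv_word u"
  by (simp add: inv_word_def)

lemma inv_word_Nil [simp]: "inv_word [] = []"
  by (simp add: inv_word_def)

lemma inv_word_Cons [simp]: "inv_word (x # w) = inv_word w @ [inv_letter x]"
  by (simp add: inv_word_def)

lemma inv_word_length [simp]: "length (inv_word w) = length w"
  by (simp add: inv_word_def)

lemma inv_word_eq_Nil [simp]: "inv_word w = [] \<longleftrightarrow> w = []"
  by (simp add: inv_word_def)

lemma hd_inv_word: "w \<noteq> [] \<Longrightarrow> hd (inv_word w) = inv_letter (last w)"
  by (simp add: inv_word_def hd_rev last_map)

lemma last_inv_word: "w \<noteq> [] \<Longrightarrow> last (inv_word w) = inv_letter (hd w)"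
  by (simp add: inv_word_def last_rev hd_map)

lemma reduced_Cons: "reduced (x # w) \<longleftrightarrow> reduced w \<and> (w = [] \<or> hd w \<noteq> inv_letter x)"
  by (cases w) auto

lemma reduced_append:
  "reduced (u @ v) \<longleftrightarrow> reduced u \<and> reduced v \<and> (u = [] \<or> v = [] \<or> hd v \<noteq> inv_letter (last u))"
  by (induct u) (auto simp: reduced_Cons)

lemma reduced_inv_word [simp]: "reduced (inv_word w) \<longleftrightarrow> reduced w"
proof (induct w)
  case (Cons x w)
  then show ?case by (cases w) (auto simp: reduced_append reduced_Cons last_inv_word)
qed simp

lemma cancel_push_reduced: "reduced w \<Longrightarrow> reduced (cancel_push x w)"
  by (cases w) (auto simp: reduced_Cons)

lemma reduce_Cons: "reduce (x # w) = cancel_push x (reduce w)"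
  by (simp add: reduce_def)

lemma reduced_reduce [simp]: "reduced (reduce w)"
  by (induct w) (auto simp: reduce_def cancel_push_reduced)

lemma reduce_reduced: "reduced w \<Longrightarrow> reduce w = w"
proof (induct w)
  case (Cons x w)
  then show ?case by (cases w) (auto simp: reduce_Cons reduced_Cons)
qed (simp add: reduce_def)

lemma reduce_append_foldr: "reduce (u @ v) = foldr cancel_push u (reduce v)"
  by (simp add: reduce_def)

lemma cancel_push_inv: "reduced w \<Longrightarrow> cancel_push x (cancel_push (inv_letter x) w) = w"
proof (cases w)
  case (Cons y ys)
  assume r: "reduced w"
  show ?thesis
  proof (cases "y = x")
    case True
    then show ?thesis using Cons r by (cases ys) (auto simp: reduced_Cons)
  qed (use Cons in auto)
qed simp

lemma foldr_cancel_push_reduced: "reduced w \<Longrightarrow> reduced (foldr cancel_push u w)"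
  by (induct u) (auto simp: cancel_push_reduced)

lemma foldr_cancel_push_reduce:
  "reduced w \<Longrightarrow> foldr cancel_push (reduce u) w = foldr cancel_push u w"
proof (induct u arbitrary: w)
  case (Cons x u)
  show ?case
  proof (cases "\<exists>r'. reduce u = inv_letter x # r'")
    case True
    then obtain r' where r': "reduce u = inv_letter x # r'" by blast
    have "foldr cancel_push (reduce (x # u)) w = foldr cancel_push r' w"
      by (simp add: reduce_Cons r')
    also have "\<dots> = cancel_push x (cancel_push (inv_letter x) (foldr cancel_push r' w))"
      by (rule cancel_push_inv[symmetric]) (simp add: Cons.prems foldr_cancel_push_reduced)
    also have "\<dots> = foldr cancel_push (x # u) w" using Cons by (simp add: r')
    finally show ?thesis .
  next
    case False
    then have "cancel_push x (reduce u) = x # reduce u" by (cases "reduce u") auto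
    then show ?thesis using Cons by (simp add: reduce_Cons)
  qed
qed (simp add: reduce_def)

lemma reduce_append_left: "reduce (reduce u @ v) = reduce (u @ v)"
  by (simp add: reduce_append_foldr foldr_cancel_push_reduce)

lemma reduce_append_right: "reduce (u @ reduce v) = reduce (u @ v)"
  by (simp add: reduce_append_foldr reduce_reduced)

lemma reduce_inv_cancel: "reduce (inv_word u @ u) = []"
proof (induct u)
  case (Cons x u)
  have "reduce (inv_word (x # u) @ x # u)
      = foldr cancel_push (inv_word u) (cancel_push (inv_letter x) (cancel_push x (reduce u)))"
    by (simp add: reduce_append_foldr reduce_Cons)
  also have "\<dots> = foldr cancel_push (inv_word u) (reduce u)"
    using cancel_push_inv[of "reduce u" "inv_letter x"] by simp
  also have "\<dots> = []" using Cons by (simp add: reduce_append_foldr)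
  finally show ?case .
qed (simp add: reduce_def)

lemma reduce_cancel_inv: "reduce (u @ inv_word u) = []"
  using reduce_inv_cancel[of "inv_word u"] by simp

lemma reduce_cancel_left: "reduce (u @ inv_word u @ v) = reduce v"
  by (metis append.assoc append.left_neutral reduce_append_left reduce_cancel_inv)

lemma reduce_cancel_right: "reduce (v @ inv_word u @ u) = reduce v"
  by (metis append_Nil2 reduce_append_right reduce_inv_cancel)

lemma reduce_inv: "reduce (inv_word w) = inv_word (reduce w)"
proof -
  have "reduce (inv_word w) = reduce (inv_word w @ reduce w @ inv_word (reduce w))"
    by (metis append_Nil2 reduce_append_right reduce_cancel_inv)
  also have "\<dots> = reduce (reduce (inv_word w @ w) @ inv_word (reduce w))"
    by (metis append_assoc reduce_append_left reduce_append_right)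
  also have "\<dots> = inv_word (reduce w)"
    by (simp add: reduce_inv_cancel reduce_reduced)
  finally show ?thesis .
qed

lemma set_reduce: "set (reduce w) \<subseteq> set w"
proof (induct w)
  case (Cons x w)
  have "set (cancel_push x v) \<subseteq> insert x (set v)" for v by (cases v) auto
  then show ?case using Cons by (fastforce simp: reduce_Cons)
qed (simp add: reduce_def)

lemma words_on_Nil [simp]: "[] \<in> words_on S"
  by (simp add: words_on_def)

lemma words_on_append [simp]: "u @ v \<in> words_on S \<longleftrightarrow> u \<in> words_on S \<and> v \<in> words_on S"
  by (auto simp: words_on_def)

lemma words_on_inv [simp]: "inv_word u \<in> words_on S \<longleftrightarrow> u \<in> words_on S"
  by (induct u) (auto simp: words_on_def)

lemma words_on_single [simp]: "[(s, b)] \<in> words_on S \<longleftrightarrow> s \<in> S"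
  by (simp add: words_on_def)

lemma words_on_reduce: "u \<in> words_on S \<Longrightarrow> reduce u \<in> words_on S"
  using set_reduce[of u] by (auto simp: words_on_def)

lemma free_group_simps [simp]:
  "carrier (free_group S) = {w \<in> words_on S. reduced w}"
  "x \<otimes>\<^bsub>free_group S\<^esub> y = reduce (x @ y)"
  "\<one>\<^bsub>free_group S\<^esub> = []"
  by (simp_all add: free_group_def)

lemma group_free_group: "group (free_group S)"
proof (rule groupI)
  fix x assume "x \<in> carrier (free_group S)"
  then show "\<exists>y\<in>carrier (free_group S). y \<otimes>\<^bsub>free_group S\<^esub> x = \<one>\<^bsub>free_group S\<^esub>"
    by (intro bexI[of _ "inv_word x"]) (auto simp: reduce_inv_cancel)
qed (auto simp: words_on_reduce reduce_reduced reduce_append_left reduce_append_right)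

lemma inv_free_group: "x \<in> carrier (free_group S) \<Longrightarrow> inv\<^bsub>free_group S\<^esub> x = inv_word x"
  by (rule group.inv_equality[OF group_free_group]) (auto simp: reduce_inv_cancel)

abbreviation FG :: "'b word monoid" where "FG \<equiv> free_group UNIV"

interpretation fg: group "free_group UNIV"
  by (rule group_free_group)

lemma words_on_UNIV [simp]: "words_on UNIV = UNIV"
  by (simp add: words_on_def)

lemma carrier_FG [simp]: "x \<in> carrier FG \<longleftrightarrow> reduced x"
  by (simp add: words_on_def)


section \<open>Cyclically reduced words and their powers\<close>

lemma reduce_append_decomp:
  assumes "reduced x" "reduced y"
  shows "\<exists>x1 c y1. x = x1 @ c \<and> y = inv_word c @ y1 \<and> reduce (x @ y) = x1 @ y1 \<and>
           (x1 = [] \<or> y1 = [] \<or> hd y1 \<noteq> inv_letter (last x1))"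
  using assms(1)
proof (induct x)
  case Nil
  show ?case by (intro exI[of _ "[]"] exI[of _ y]) (simp add: reduce_reduced assms)
next
  case (Cons a x)
  from Cons.prems have rx: "reduced x" and hx: "x = [] \<or> hd x \<noteq> inv_letter a"
    by (simp_all add: reduced_Cons)
  from Cons.hyps[OF rx] obtain x1 c y1
    where d: "x = x1 @ c" "y = inv_word c @ y1" "reduce (x @ y) = x1 @ y1"
      and b: "x1 = [] \<or> y1 = [] \<or> hd y1 \<noteq> inv_letter (last x1)" by blast
  have eq: "reduce ((a # x) @ y) = cancel_push a (x1 @ y1)" by (simp add: reduce_Cons d(3))
  show ?case
  proof (cases "x1 = [] \<and> y1 \<noteq> [] \<and> hd y1 = inv_letter a")
    case True
    then obtain y2 where y1: "y1 = inv_letter a # y2" by (cases y1) auto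
    show ?thesis
      by (intro exI[of _ "[]"] exI[of _ "a # c"] exI[of _ y2]) (use True y1 d eq in auto)
  next
    case False
    have "cancel_push a (x1 @ y1) = a # x1 @ y1"
    proof (cases "x1 = []")
      case True
      then show ?thesis using False by (cases y1) auto
    next
      case x1: False
      then have "hd x1 \<noteq> inv_letter a" using hx d(1) by auto
      then show ?thesis using x1 by (cases x1) auto
    qed
    then show ?thesis
      using False b d eq by (intro exI[of _ "a # x1"] exI[of _ c] exI[of _ y1]) auto
  qed
qed

text \<open>A word is cyclically reduced if all its cyclic permutations are reduced.\<close>
definition cyc_red :: "'a word \<Rightarrow> bool" where
  "cyc_red z \<longleftrightarrow> reduced z \<and> z \<noteq> [] \<and> hd z \<noteq> inv_letter (last z)"

lemma cyc_red_inv: "cyc_red z \<Longrightarrow> cyc_red (inv_word z)"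
  by (auto simp: cyc_red_def hd_inv_word last_inv_word)

lemma cyc_red_carrier: "cyc_red z \<Longrightarrow> z \<in> carrier FG"
  by (simp add: cyc_red_def)

lemma reduced_conj_decomp:
  assumes "reduced w"
  shows "\<exists>p z. w = inv_word p @ z @ p \<and> (z = [] \<or> cyc_red z)"
  using assms
proof (induct "length w" arbitrary: w rule: less_induct)
  case less
  show ?case
  proof (cases "w = [] \<or> cyc_red w")
    case True
    then show ?thesis by (intro exI[of _ "[]"] exI[of _ w]) auto
  next
    case False
    then have hw: "w \<noteq> []" "hd w = inv_letter (last w)" using less.prems by (auto simp: cyc_red_def)
    then obtain x m where wx: "w = x # m" by (cases w) auto
    with hw have "m \<noteq> []" by auto
    then obtain m' y where my: "m = m' @ [y]" by (metis rev_exhaust)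
    have xy: "x = inv_letter y" using hw wx my by simp
    have "reduced m'" using less.prems wx my by (simp add: reduced_Cons reduced_append)
    from less.hyps[OF _ this] obtain p z where "m' = inv_word p @ z @ p" "z = [] \<or> cyc_red z"
      using wx my by auto
    then show ?thesis using wx my xy by (intro exI[of _ "p @ [y]"] exI[of _ z]) auto
  qed
qed

lemma conj_cyc_red:
  assumes "X \<in> carrier FG" "X \<noteq> \<one>\<^bsub>FG\<^esub>"
  shows "\<exists>p z. p \<in> carrier FG \<and> cyc_red z \<and> X = inv\<^bsub>FG\<^esub> p \<otimes>\<^bsub>FG\<^esub> z \<otimes>\<^bsub>FG\<^esub> p"
proof -
  have rX: "reduced X" "X \<noteq> []" using assms by auto
  obtain p z where pz: "X = inv_word p @ z @ p" "z = [] \<or> cyc_red z"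
    using reduced_conj_decomp[OF rX(1)] by blast
  have rp: "reduced p" using rX pz by (simp add: reduced_append)
  have cz: "cyc_red z"
  proof (cases "z = []")
    case True
    with pz rX have "p \<noteq> []" by auto
    then have "\<not> reduced X" using pz True by (simp add: reduced_append hd_inv_word last_inv_word)
    then show ?thesis using rX by simp
  qed (use pz in auto)
  have "inv\<^bsub>FG\<^esub> p \<otimes>\<^bsub>FG\<^esub> z \<otimes>\<^bsub>FG\<^esub> p = reduce (reduce (inv_word p @ z) @ p)"
    using rp by (simp add: inv_free_group)
  also have "\<dots> = X" using pz rX by (simp add: reduce_append_left reduce_reduced)
  finally show ?thesis using rp cz by auto
qed

lemma concat_replicate_Suc_right: "concat (replicate (Suc k) e) = concat (replicate k e) @ e"
  by (induct k) auto

lemma cyc_red_root: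
  assumes "cyc_red z" "z = concat (replicate m f)" "m \<ge> 1"
  shows "cyc_red f"
proof -
  obtain k where m: "m = Suc k" using assms(3) by (cases m) auto
  have z1: "z = f @ concat (replicate k f)" using assms(2) m by simp
  have z2: "z = concat (replicate k f) @ f" using assms(2) m concat_replicate_Suc_right by metis
  have "f \<noteq> []" using assms(1) z1 by (auto simp: cyc_red_def)
  moreover have "reduced f" using assms(1) z1 by (simp add: cyc_red_def reduced_append)
  moreover have "hd z = hd f" using z1 \<open>f \<noteq> []\<close> by simp
  moreover have "last z = last f" using z2 \<open>f \<noteq> []\<close> by simp
  ultimately show ?thesis using assms(1) by (auto simp: cyc_red_def)
qed

lemma reduced_concat_replicate: "cyc_red f \<Longrightarrow> reduced (concat (replicate k f))"
proof (induct k)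
  case (Suc k)
  have "hd (concat (replicate k f)) = hd f" if "k \<ge> 1" using Suc.prems that
    by (cases k) (auto simp: cyc_red_def)
  then show ?case using Suc by (cases k) (auto simp: reduced_append cyc_red_def)
qed simp

lemma cyc_red_pow: "cyc_red f \<Longrightarrow> f [^]\<^bsub>FG\<^esub> (k::nat) = concat (replicate k f)"
proof (induct k)
  case (Suc k)
  then show ?case using reduced_concat_replicate[OF Suc.prems, of "Suc k"]
    by (simp add: reduce_reduced concat_replicate_Suc_right[symmetric]
        del: concat_replicate_Suc_right)
qed simp

lemma cyc_red_int_pow: "cyc_red f \<Longrightarrow> concat (replicate k f) = f [^]\<^bsub>FG\<^esub> (int k)"
  by (simp add: cyc_red_pow int_pow_int)

lemma cyc_red_infinite_order:
  assumes "cyc_red f" "n \<noteq> 0"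
  shows "f [^]\<^bsub>FG\<^esub> (n::nat) \<noteq> \<one>\<^bsub>FG\<^esub>"
proof -
  have "concat (replicate n f) \<noteq> []" using assms by (cases n) (auto simp: cyc_red_def)
  then show ?thesis by (simp add: cyc_red_pow[OF assms(1)])
qed

lemma equal_powers_common_root:
  assumes eq: "concat (replicate m e) = concat (replicate n f)" and "m \<ge> 1" "n \<ge> 1"
  shows "\<exists>d a b. e = concat (replicate a d) \<and> f = concat (replicate b d)"
proof (cases "m = 1 \<or> n = 1")
  case True
  then show ?thesis
  proof
    assume "m = 1" then show ?thesis using eq
      by (intro exI[of _ f] exI[of _ n] exI[of _ 1]) auto
  next
    assume "n = 1" then show ?thesis using eq
      by (intro exI[of _ e] exI[of _ 1] exI[of _ m]) auto
  qed
next
  case False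
  then have m2: "m \<ge> 2" "n \<ge> 2" using assms by auto
  define w where "w = concat (replicate m e)"
  have ew: "e @ w = w @ e" unfolding w_def
    by (metis concat.simps(2) concat_replicate_Suc_right replicate_Suc)
  have fw: "f @ w = w @ f" unfolding w_def eq
    by (metis concat.simps(2) concat_replicate_Suc_right replicate_Suc)
  have "length w = m * length e" unfolding w_def by (simp add: length_concat sum_list_replicate)
  moreover have "length w = n * length f" unfolding w_def eq
    by (simp add: length_concat sum_list_replicate)
  ultimately have len: "length e + length f \<le> length w"
    using m2 mult_le_mono1[of 2 m "length e"] mult_le_mono1[of 2 n "length f"] by linarith
  have ef: "e @ f @ w = w @ e @ f" and fe: "f @ e @ w = w @ f @ e"
    using ew fw by (metis append.assoc)+
  have "e @ f = take (length e + length f) w"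
    using arg_cong[OF ef, of "take (length e + length f)"] len by simp
  moreover have "f @ e = take (length e + length f) w"
    using arg_cong[OF fe, of "take (length e + length f)"] len by (simp add: add.commute)
  ultimately have "e @ f = f @ e" by simp
  then show ?thesis using comm_append_are_replicate by metis
qed


section \<open>Centralisers in the free group\<close>

definition common_root :: "'a word \<Rightarrow> 'a word \<Rightarrow> bool" where
  "common_root z y \<longleftrightarrow> (\<exists>e m j. m \<ge> 1 \<and> z = concat (replicate m e) \<and> cyc_red e \<and>
                                  y = e [^]\<^bsub>FG\<^esub> (j::int))"

lemma common_root_self: "cyc_red z \<Longrightarrow> common_root z []"
  unfolding common_root_def by (intro exI[of _ z] exI[of _ 1] exI[of _ 0]) auto

lemma common_root_literal:
  assumes cz: "cyc_red z" and yz: "y @ z = z @ y"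
  shows "common_root z y"
proof -
  obtain a b f where ab: "concat (replicate a f) = y" "concat (replicate b f) = z"
    using comm_append_are_replicate[OF yz] by blast
  have "b \<ge> 1" using ab cz by (cases b) (auto simp: cyc_red_def)
  then have "cyc_red f" using cyc_red_root[OF cz ab(2)[symmetric]] by simp
  then show ?thesis
    unfolding common_root_def using ab \<open>b \<ge> 1\<close> cyc_red_int_pow by metis
qed

lemma common_root_shift:
  assumes "common_root z y"
  shows "common_root z (inv\<^bsub>FG\<^esub> z \<otimes>\<^bsub>FG\<^esub> y)" "common_root z (y \<otimes>\<^bsub>FG\<^esub> inv\<^bsub>FG\<^esub> z)"
proof -
  obtain e m j where h: "m \<ge> 1" "z = concat (replicate m e)" "cyc_red e" "y = e [^]\<^bsub>FG\<^esub> (j::int)"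
    using assms unfolding common_root_def by blast
  have ec: "e \<in> carrier FG" using h(3) by (rule cyc_red_carrier)
  have z: "z = e [^]\<^bsub>FG\<^esub> (int m)" using h cyc_red_int_pow by metis
  have "inv\<^bsub>FG\<^esub> z \<otimes>\<^bsub>FG\<^esub> y = e [^]\<^bsub>FG\<^esub> (- int m + j)"
    "y \<otimes>\<^bsub>FG\<^esub> inv\<^bsub>FG\<^esub> z = e [^]\<^bsub>FG\<^esub> (j + - int m)"
    using ec by (simp_all only: z h(4) fg.int_pow_mult fg.int_pow_neg)
  then show "common_root z (inv\<^bsub>FG\<^esub> z \<otimes>\<^bsub>FG\<^esub> y)" "common_root z (y \<otimes>\<^bsub>FG\<^esub> inv\<^bsub>FG\<^esub> z)"
    unfolding common_root_def using h by blast+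
qed

lemma common_root_split:
  assumes "c @ z1 = z1 @ c" "z = c @ z1" "y = inv_word c" "cyc_red z"
  shows "common_root z y"
proof -
  obtain a b f where ab: "concat (replicate a f) = c" "concat (replicate b f) = z1"
    using comm_append_are_replicate[OF assms(1)] by blast
  have z: "z = concat (replicate (a + b) f)" using ab assms(2) by (simp add: replicate_add)
  have "a + b \<ge> 1" using z assms(4) by (cases "a + b") (auto simp: cyc_red_def)
  then have cf: "cyc_red f" using cyc_red_root[OF assms(4) z] by simp
  have fc: "f \<in> carrier FG" using cf by (rule cyc_red_carrier)
  have "c = f [^]\<^bsub>FG\<^esub> a" using ab(1) cyc_red_pow[OF cf] by simp
  then have "y = inv\<^bsub>FG\<^esub> (f [^]\<^bsub>FG\<^esub> a)"
    using assms(3) inv_free_group[of "f [^]\<^bsub>FG\<^esub> a" UNIV] fg.nat_pow_closed[OF fc, of a] by simp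
  also have "\<dots> = f [^]\<^bsub>FG\<^esub> (- int a)" using fg.int_pow_neg_int[OF fc] by simp
  finally show ?thesis unfolding common_root_def using z \<open>a + b \<ge> 1\<close> cf by blast
qed

lemma commute_cancel_head:
  assumes cz: "cyc_red z" and ry: "reduced y" and cm: "reduce (y @ z) = reduce (z @ y)"
    and yne: "y \<noteq> []" and hy: "hd y = inv_letter (last z)"
    and nA: "\<not> (\<exists>y'. y = inv_word z @ y')"
  shows "\<exists>c z1. c @ z1 = z1 @ c \<and> z = c @ z1 \<and> y = inv_word c"
proof -
  have rz: "reduced z" and zne: "z \<noteq> []" and hz: "hd z \<noteq> inv_letter (last z)"
    using cz by (auto simp: cyc_red_def)
  obtain z1 c y1 where d1: "z = z1 @ c" "y = inv_word c @ y1" "reduce (z @ y) = z1 @ y1"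
    and b1: "z1 = [] \<or> y1 = [] \<or> hd y1 \<noteq> inv_letter (last z1)"
    using reduce_append_decomp[OF rz ry] by blast
  have z1ne: "z1 \<noteq> []" using d1 nA by auto
  obtain y2 d z2 where d2: "y = y2 @ d" "z = inv_word d @ z2" "reduce (y @ z) = y2 @ z2"
    using reduce_append_decomp[OF ry rz] by blast
  have eq: "y2 @ z2 = z1 @ y1" using d1(3) d2(3) cm by simp
  have "y2 = []"
  proof (rule ccontr)
    assume "y2 \<noteq> []"
    then have "hd y = hd z" using eq d1(1) d2(1) z1ne by (metis hd_append2)
    then show False using hy hz by simp
  qed
  then have yd: "y = d" and z2: "z2 = z1 @ y1" using d2(1) eq by auto
  have "z = inv_word y1 @ c @ z1 @ y1" using d1(2) d2(2) yd z2 by simp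
  then have "length z = length y1 + length c + length z1 + length y1" by simp
  then have "length y1 = 0" using d1(1) by simp
  then show ?thesis using d1 d2 yd z2 eq by (intro exI[of _ c] exI[of _ z1]) auto
qed

lemma commute_cancel_last:
  assumes cz: "cyc_red z" and ry: "reduced y" and cm: "reduce (y @ z) = reduce (z @ y)"
    and yne: "y \<noteq> []" and ly: "last y = inv_letter (hd z)"
    and nB: "\<not> (\<exists>y'. y = y' @ inv_word z)"
  shows "common_root z y"
proof -
  have zne: "z \<noteq> []" using cz by (simp add: cyc_red_def)
  have cm': "reduce (inv_word y @ inv_word z) = reduce (inv_word z @ inv_word y)"
    using cm by (metis inv_word_append reduce_inv)
  have h': "hd (inv_word y) = inv_letter (last (inv_word z))"
    using ly yne zne by (simp add: hd_inv_word last_inv_word)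
  have nA': "\<not> (\<exists>y'. inv_word y = inv_word (inv_word z) @ y')"
    using nB by (metis inv_word_append inv_word_inv)
  obtain c z1 where cz1: "c @ z1 = z1 @ c" "inv_word z = c @ z1" "inv_word y = inv_word c"
    using commute_cancel_head[OF cyc_red_inv[OF cz] _ cm' _ h' nA'] ry yne by auto
  have "inv_word c @ inv_word z1 = inv_word z1 @ inv_word c" using cz1(1)
    by (metis inv_word_append)
  moreover have "z = inv_word c @ inv_word z1" "y = inv_word (inv_word c)"
    using cz1 by (metis inv_word_append inv_word_inv)+
  ultimately show ?thesis using common_root_split cz by blast
qed

lemma commute_unshifted:
  assumes cz: "cyc_red z" and ry: "reduced y" and cm: "reduce (y @ z) = reduce (z @ y)"
    and nA: "\<not> (\<exists>y'. y = inv_word z @ y')" and nB: "\<not> (\<exists>y'. y = y' @ inv_word z)"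
  shows "common_root z y"
proof -
  have rz: "reduced z" and zne: "z \<noteq> []" using cz by (auto simp: cyc_red_def)
  consider "y = []" | "y \<noteq> []" "hd y = inv_letter (last z)"
    | "y \<noteq> []" "last y = inv_letter (hd z)"
    | "y \<noteq> []" "hd y \<noteq> inv_letter (last z)" "last y \<noteq> inv_letter (hd z)" by blast
  then show ?thesis
  proof cases
    case 1
    then show ?thesis using common_root_self[OF cz] by simp
  next
    case 2
    then show ?thesis using commute_cancel_head[OF cz ry cm _ _ nA] common_root_split cz by blast
  next
    case 3
    then show ?thesis using commute_cancel_last[OF cz ry cm _ _ nB] by blast
  next
    case 4
    have "reduced (y @ z)" using ry rz 4 zne by (simp add: reduced_append) (metis inv_letter_inv)
    moreover have "reduced (z @ y)" using ry rz 4 zne by (simp add: reduced_append)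
    ultimately have "y @ z = z @ y" using cm by (simp add: reduce_reduced)
    then show ?thesis using common_root_literal[OF cz] by blast
  qed
qed

text \<open>Everything commuting with a cyclically reduced z has a common root with z;
  shifting by z^-1 reduces to the unshifted case.\<close>
lemma commute_common_root:
  assumes cz: "cyc_red z"
  shows "reduced y \<Longrightarrow> reduce (y @ z) = reduce (z @ y) \<Longrightarrow> common_root z y"
proof (induct "length y" arbitrary: y rule: less_induct)
  case less
  have zc: "z \<in> carrier FG" and zne: "z \<noteq> []" using cz by (auto simp: cyc_red_def)
  consider y' where "y = inv_word z @ y'" | y' where "y = y' @ inv_word z"
    | "\<not> (\<exists>y'. y = inv_word z @ y')" "\<not> (\<exists>y'. y = y' @ inv_word z)" by blast
  then show ?case
  proof cases
    case (1 y')
    have ry': "reduced y'" using less.prems 1 by (simp add: reduced_append)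
    have y': "y' = reduce (z @ y)" using 1 ry' by (simp add: reduce_cancel_left reduce_reduced)
    have "reduce (y' @ z) = reduce (z @ y @ z)" by (simp add: y' reduce_append_left)
    also have "\<dots> = reduce (z @ y')"
      using less.prems(2) by (metis y' reduce_append_right)
    finally have "common_root z y'" using less.hyps 1 ry' zne by simp
    moreover have "y = inv\<^bsub>FG\<^esub> z \<otimes>\<^bsub>FG\<^esub> y'"
      using less.prems 1 zc by (simp add: inv_free_group reduce_reduced del: carrier_FG)
    ultimately show ?thesis using common_root_shift by metis
  next
    case (2 y')
    have ry': "reduced y'" using less.prems 2 by (simp add: reduced_append)
    have y': "y' = reduce (y @ z)" using 2 ry' by (simp add: reduce_cancel_right reduce_reduced)
    have "reduce (y' @ z) = reduce (z @ y @ z)"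
      using less.prems(2) by (metis y' append_assoc reduce_append_left)
    also have "\<dots> = reduce (z @ y')" by (simp add: y' reduce_append_right)
    finally have "common_root z y'" using less.hyps 2 ry' zne by simp
    moreover have "y = y' \<otimes>\<^bsub>FG\<^esub> inv\<^bsub>FG\<^esub> z"
      using less.prems 2 zc by (simp add: inv_free_group reduce_reduced del: carrier_FG)
    ultimately show ?thesis using common_root_shift by metis
  next
    case 3
    then show ?thesis using commute_unshifted[OF cz less.prems] by blast
  qed
qed

text \<open>The shortest root of a cyclically reduced z generates its centraliser.\<close>
lemma primitive_root_centralizer:
  assumes cz: "cyc_red z"
  shows "\<exists>e m. m \<ge> 1 \<and> z = concat (replicate m e) \<and> cyc_red e \<and>
     (\<forall>y. reduced y \<longrightarrow> reduce (y @ z) = reduce (z @ y) \<longrightarrow> (\<exists>j::int. y = e [^]\<^bsub>FG\<^esub> j))"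
proof -
  define is_root where "is_root e \<longleftrightarrow> (\<exists>m\<ge>1. z = concat (replicate m e))" for e
  have "is_root z" unfolding is_root_def by (intro exI[of _ 1]) simp
  then obtain e where root: "is_root e" and shortest: "\<And>e'. is_root e' \<Longrightarrow> length e \<le> length e'"
    using ex_has_least_nat[of is_root z length] by blast
  then obtain m where m: "m \<ge> 1" "z = concat (replicate m e)" unfolding is_root_def by blast
  have ce: "cyc_red e" using cyc_red_root[OF cz m(2) m(1)] .
  have ene: "e \<noteq> []" using ce by (simp add: cyc_red_def)
  have ec: "e \<in> carrier FG" using ce by (rule cyc_red_carrier)
  have "\<exists>j::int. y = e [^]\<^bsub>FG\<^esub> j" if ry: "reduced y" and cm: "reduce (y @ z) = reduce (z @ y)" for y
  proof -
    obtain f k j where fk: "k \<ge> 1" "z = concat (replicate k f)" "y = f [^]\<^bsub>FG\<^esub> (j::int)"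
      using commute_common_root[OF cz ry cm] unfolding common_root_def by blast
    obtain d a b where dab: "e = concat (replicate a d)" "f = concat (replicate b d)"
      using equal_powers_common_root[of m e k f] m fk by auto
    have "a \<ge> 1" using dab ene by (cases a) auto
    moreover have "concat (replicate m (concat (replicate a d))) = concat (replicate (m * a) d)"
      by (induct m) (auto simp: replicate_add)
    ultimately have "is_root d" unfolding is_root_def
      using m dab by (intro exI[of _ "m * a"]) simp
    then have "length e \<le> length d" by (rule shortest)
    moreover have "length e = a * length d" using dab by (simp add: length_concat sum_list_replicate)
    moreover have "d \<noteq> []" using dab ene by auto
    ultimately have "e = d" using dab \<open>a \<ge> 1\<close> by (cases a) auto
    then have "f = e [^]\<^bsub>FG\<^esub> (int b)" using dab cyc_red_int_pow[OF ce] by metis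
    then have "y = e [^]\<^bsub>FG\<^esub> (int b * j)" using fk(3) fg.int_pow_pow[OF ec] by simp
    then show ?thesis by blast
  qed
  then show ?thesis using m ce by blast
qed


section \<open>Groups in which centralisers are infinite cyclic\<close>

context group
begin

lemma inv_mult_cancel_left [simp]: "x \<in> carrier G \<Longrightarrow> y \<in> carrier G \<Longrightarrow> inv x \<otimes> (x \<otimes> y) = y"
  by (simp flip: m_assoc)

lemma mult_inv_cancel_left [simp]: "x \<in> carrier G \<Longrightarrow> y \<in> carrier G \<Longrightarrow> x \<otimes> (inv x \<otimes> y) = y"
  by (simp flip: m_assoc)

lemma commute_inv:
  assumes "x \<in> carrier G" "y \<in> carrier G" "x \<otimes> y = y \<otimes> x"
  shows "x \<otimes> inv y = inv y \<otimes> x"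
proof -
  have "x \<otimes> inv y = inv y \<otimes> (y \<otimes> x) \<otimes> inv y" using assms(1,2) by (simp add: m_assoc)
  also have "\<dots> = inv y \<otimes> (x \<otimes> y) \<otimes> inv y" using assms by simp
  also have "\<dots> = inv y \<otimes> x" using assms(1,2) by (simp add: m_assoc)
  finally show ?thesis .
qed

lemma commute_int_pow:
  assumes "x \<in> carrier G" "y \<in> carrier G" "x \<otimes> y = y \<otimes> x"
  shows "x \<otimes> y [^] (i::int) = y [^] i \<otimes> x"
proof -
  have nat_pow: "x \<otimes> y [^] n = y [^] n \<otimes> x" for n :: nat
    using group_commutes_pow[of y x n] assms by simp
  show ?thesis
  proof (cases "i < 0")
    case True
    then have "y [^] i = inv (y [^] nat (- i))" using int_pow_def2[of G y i] by presburger
    then show ?thesis using commute_inv[OF assms(1) nat_pow_closed[OF assms(2)] nat_pow] by simp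
  next
    case False
    then have "y [^] i = y [^] nat i" using int_pow_def2[of G y i] by presburger
    then show ?thesis using nat_pow by simp
  qed
qed

lemma conj_int_pow:
  assumes "a \<in> carrier G" "x \<in> carrier G"
  shows "(inv a \<otimes> x \<otimes> a) [^] (i::int) = inv a \<otimes> x [^] i \<otimes> a"
proof -
  have "(\<lambda>x. inv a \<otimes> x \<otimes> a) \<in> hom G G"
    using assms(1) unfolding hom_def by (auto simp: m_assoc)
  from hom_int_pow[OF this assms(2) is_group is_group] show ?thesis by simp
qed

lemma conj_pow_eq_one_iff:
  assumes "a \<in> carrier G" "x \<in> carrier G"
  shows "(inv a \<otimes> x \<otimes> a) [^] (n::nat) = \<one> \<longleftrightarrow> x [^] n = \<one>"
proof -
  have pow: "(inv a \<otimes> x \<otimes> a) [^] n = inv a \<otimes> x [^] n \<otimes> a"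
    using conj_int_pow[OF assms, of "int n"] by (simp add: int_pow_int)
  have "x [^] n = a \<otimes> (inv a \<otimes> x [^] n \<otimes> a) \<otimes> inv a" using assms by (simp add: m_assoc)
  then show ?thesis using pow assms by auto
qed

lemma conj_commute:
  assumes "t \<in> carrier G" "x \<in> carrier G" "y \<in> carrier G" "x \<otimes> y = y \<otimes> x"
  shows "(t \<otimes> x \<otimes> inv t) \<otimes> (t \<otimes> y \<otimes> inv t) = (t \<otimes> y \<otimes> inv t) \<otimes> (t \<otimes> x \<otimes> inv t)"
proof -
  have "(t \<otimes> x \<otimes> inv t) \<otimes> (t \<otimes> y \<otimes> inv t) = t \<otimes> (x \<otimes> y) \<otimes> inv t"
    using assms(1-3) by (simp add: m_assoc)
  also have "\<dots> = t \<otimes> (y \<otimes> x) \<otimes> inv t" by (simp only: assms(4))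
  also have "\<dots> = (t \<otimes> y \<otimes> inv t) \<otimes> (t \<otimes> x \<otimes> inv t)"
    using assms(1-3) by (simp add: m_assoc)
  finally show ?thesis .
qed

lemma commutator_eq_one_iff:
  assumes "a \<in> carrier G" "b \<in> carrier G"
  shows "inv a \<otimes> (inv b \<otimes> (a \<otimes> b)) = \<one> \<longleftrightarrow> a \<otimes> b = b \<otimes> a"
proof -
  have e: "inv a \<otimes> (inv b \<otimes> (a \<otimes> b)) = inv (b \<otimes> a) \<otimes> (a \<otimes> b)"
    using assms by (simp add: inv_mult_group m_assoc)
  show ?thesis
  proof
    assume "inv a \<otimes> (inv b \<otimes> (a \<otimes> b)) = \<one>"
    then have "(b \<otimes> a) \<otimes> (inv (b \<otimes> a) \<otimes> (a \<otimes> b)) = b \<otimes> a" using e assms by simp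
    then show "a \<otimes> b = b \<otimes> a" using assms by simp
  next
    assume "a \<otimes> b = b \<otimes> a"
    then show "inv a \<otimes> (inv b \<otimes> (a \<otimes> b)) = \<one>" using e assms by simp
  qed
qed

lemma infinite_order_int_pow_eq:
  assumes "x \<in> carrier G" "\<forall>n::nat. n \<noteq> 0 \<longrightarrow> x [^] n \<noteq> \<one>"
  shows "x [^] (i::int) = x [^] j \<longleftrightarrow> i = j"
proof -
  have "ord x = 0" using ord_eq_0[OF assms(1)] assms(2) by blast
  then show ?thesis using int_pow_eq[OF assms(1)] by auto
qed

end

locale cyclic_centralizers = group +
  assumes cyclic_centralizer: "X \<in> carrier G \<Longrightarrow> X \<noteq> \<one> \<Longrightarrow>
    \<exists>e\<in>carrier G. (\<forall>n::nat. n \<noteq> 0 \<longrightarrow> e [^] n \<noteq> \<one>) \<and> (\<exists>m::int. X = e [^] m) \<and>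
                  (\<forall>y\<in>carrier G. y \<otimes> X = X \<otimes> y \<longrightarrow> (\<exists>j::int. y = e [^] j))"
begin

lemma commute_trans:
  assumes "X \<in> carrier G" "X \<noteq> \<one>" "a \<in> carrier G" "b \<in> carrier G"
    and "a \<otimes> X = X \<otimes> a" "b \<otimes> X = X \<otimes> b"
  shows "a \<otimes> b = b \<otimes> a"
proof -
  obtain e where e: "e \<in> carrier G"
    and C: "\<forall>y\<in>carrier G. y \<otimes> X = X \<otimes> y \<longrightarrow> (\<exists>j::int. y = e [^] j)"
    using cyclic_centralizer[OF assms(1,2)] by blast
  then obtain i j :: int where "a = e [^] i" "b = e [^] j" using assms by blast
  then show ?thesis using e by (simp flip: int_pow_mult add: add.commute)
qed

lemma square_eq_one:
  assumes t: "t \<in> carrier G" "t \<otimes> t = \<one>"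
  shows "t = \<one>"
proof (rule ccontr)
  assume "t \<noteq> \<one>"
  then obtain e m where e: "e \<in> carrier G" "\<forall>n::nat. n \<noteq> 0 \<longrightarrow> e [^] n \<noteq> \<one>" "t = e [^] (m::int)"
    using cyclic_centralizer[OF t(1)] by blast
  have "e [^] (m + m) = t \<otimes> t" by (simp only: e(3) int_pow_mult[OF e(1)])
  then have "e [^] (m + m) = e [^] (0::int)" using t(2) by simp
  then have "m + m = 0" using infinite_order_int_pow_eq[OF e(1,2)] by blast
  then show False using e(3) \<open>t \<noteq> \<one>\<close> by simp
qed

lemma no_conj_to_inverse:
  assumes e: "e \<in> carrier G" "e \<noteq> \<one>" and t: "t \<in> carrier G"
    and inv_conj: "inv t \<otimes> e \<otimes> t = inv e"
  shows False
proof -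
  define w where "w = t \<otimes> t"
  have wc: "w \<in> carrier G" using t by (simp add: w_def)
  have "inv w \<otimes> e \<otimes> w = inv t \<otimes> (inv t \<otimes> e \<otimes> t) \<otimes> t"
    using t e by (simp add: w_def inv_mult_group m_assoc)
  also have "\<dots> = inv t \<otimes> inv e \<otimes> t" using inv_conj by simp
  also have "\<dots> = inv (inv t \<otimes> e \<otimes> t)" using t e by (simp add: inv_mult_group m_assoc)
  also have "\<dots> = e" using inv_conj e by simp
  finally have "w \<otimes> (inv w \<otimes> e \<otimes> w) = w \<otimes> e" by simp
  then have ew: "e \<otimes> w = w \<otimes> e" using wc e by (simp add: m_assoc)
  have "t \<otimes> e = e \<otimes> t"
  proof (cases "w = \<one>")
    case True
    then show ?thesis using square_eq_one[OF t] e by (simp add: w_def)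
  next
    case False
    have "t \<otimes> w = w \<otimes> t" using t by (simp add: w_def m_assoc)
    then show ?thesis using commute_trans[OF wc False t e(1)] ew by simp
  qed
  then have "inv t \<otimes> e \<otimes> t = e" using t e by (simp add: m_assoc flip: \<open>t \<otimes> e = e \<otimes> t\<close>)
  then have "inv e = e" using inv_conj by simp
  then have "e \<otimes> e = \<one>" using e by (metis r_inv)
  then show False using square_eq_one e by blast
qed

text \<open>A nontrivial g commuting with its conjugate t^-1 g t commutes with t.
  With g = e^m and u = t^-1 e t, both u and t e t^-1 are powers of e, which
  forces u = e or u = e^-1; the latter is impossible.\<close>
lemma commutes_with_conjugate:
  assumes g: "g \<in> carrier G" "g \<noteq> \<one>" and t: "t \<in> carrier G"
    and gh: "g \<otimes> (inv t \<otimes> g \<otimes> t) = (inv t \<otimes> g \<otimes> t) \<otimes> g"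
  shows "t \<otimes> g = g \<otimes> t"
proof -
  obtain e m where e: "e \<in> carrier G" "\<forall>n::nat. n \<noteq> 0 \<longrightarrow> e [^] n \<noteq> \<one>" "g = e [^] (m::int)"
    and C: "\<forall>y\<in>carrier G. y \<otimes> g = g \<otimes> y \<longrightarrow> (\<exists>j::int. y = e [^] j)"
    using cyclic_centralizer[OF g] by blast
  have e1: "e \<noteq> \<one>" using e(2) by (metis nat_pow_one one_neq_zero)
  define h where "h = inv t \<otimes> g \<otimes> t"
  define u where "u = inv t \<otimes> e \<otimes> t"
  have hc: "h \<in> carrier G" and uc: "u \<in> carrier G" using g t e by (auto simp: h_def u_def)
  have hu: "h = u [^] m" unfolding h_def u_def using conj_int_pow[OF t e(1)] e(3) by simp
  have tht: "t \<otimes> h \<otimes> inv t = g" using g t by (simp add: h_def m_assoc)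
  have hne: "h \<noteq> \<one>" using tht g t by auto
  have gh': "g \<otimes> h = h \<otimes> g" using gh by (simp add: h_def)
  have "u \<otimes> g = g \<otimes> u"
    using commute_trans[OF hc hne uc g(1)] hu commute_int_pow[OF uc uc refl] gh' by simp
  then obtain j :: int where uj: "u = e [^] j" using C uc by blast
  have "e \<otimes> h = h \<otimes> e"
    using commute_trans[OF g e(1) hc] commute_int_pow[OF e(1) e(1) refl] e(3) gh' by simp
  then have "(t \<otimes> e \<otimes> inv t) \<otimes> g = g \<otimes> (t \<otimes> e \<otimes> inv t)"
    using conj_commute[OF t e(1) hc] tht by simp
  then obtain k :: int where vk: "t \<otimes> e \<otimes> inv t = e [^] k" using C t e by auto
  have "e = inv t \<otimes> (t \<otimes> e \<otimes> inv t) \<otimes> t" using t e by (simp add: m_assoc)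
  also have "\<dots> = u [^] k" unfolding u_def using conj_int_pow[OF t e(1)] vk by simp
  also have "\<dots> = e [^] (j * k)" using uj int_pow_pow[OF e(1)] by simp
  finally have "e [^] (1::int) = e [^] (j * k)" using e(1) by simp
  then have "j * k = 1" using infinite_order_int_pow_eq[OF e(1,2)] by simp
  then have "j = 1 \<or> j = -1" using zmult_eq_1_iff by blast
  moreover have "j \<noteq> -1"
  proof
    assume "j = -1"
    then have "inv t \<otimes> e \<otimes> t = inv e" using uj e(1) by (simp add: u_def int_pow_neg)
    then show False using no_conj_to_inverse[OF e(1) e1 t] by blast
  qed
  ultimately have "inv t \<otimes> e \<otimes> t = e" using uj e(1) by (simp add: u_def)
  then have "t \<otimes> (inv t \<otimes> e \<otimes> t) = t \<otimes> e" by simp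
  then have "t \<otimes> e = e \<otimes> t" using t e by (simp add: m_assoc)
  then show ?thesis using commute_int_pow[OF t e(1)] e(3) by simp
qed

end


section \<open>The free group has infinite cyclic centralisers\<close>

declare free_group_simps [simp del] carrier_FG [simp del]

text \<open>Write X = p^-1 z p with z cyclically reduced; the centraliser of z is
  generated by the primitive root of z, so that of X by its conjugate.\<close>
lemma free_group_cyclic_centralizer:
  assumes X: "X \<in> carrier FG" "X \<noteq> \<one>\<^bsub>FG\<^esub>"
  shows "\<exists>e\<in>carrier FG. (\<forall>n::nat. n \<noteq> 0 \<longrightarrow> e [^]\<^bsub>FG\<^esub> n \<noteq> \<one>\<^bsub>FG\<^esub>) \<and>
           (\<exists>m::int. X = e [^]\<^bsub>FG\<^esub> m) \<and>
           (\<forall>y\<in>carrier FG. y \<otimes>\<^bsub>FG\<^esub> X = X \<otimes>\<^bsub>FG\<^esub> y \<longrightarrow> (\<exists>j::int. y = e [^]\<^bsub>FG\<^esub> j))"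
proof -
  obtain p z where pz: "p \<in> carrier FG" "cyc_red z" "X = inv\<^bsub>FG\<^esub> p \<otimes>\<^bsub>FG\<^esub> z \<otimes>\<^bsub>FG\<^esub> p"
    using conj_cyc_red[OF X] by blast
  obtain e0 m where e0: "m \<ge> 1" "z = concat (replicate m e0)" "cyc_red e0"
    and C0: "\<forall>y. reduced y \<longrightarrow> reduce (y @ z) = reduce (z @ y) \<longrightarrow> (\<exists>j::int. y = e0 [^]\<^bsub>FG\<^esub> j)"
    using primitive_root_centralizer[OF pz(2)] by blast
  have e0c: "e0 \<in> carrier FG" and zc: "z \<in> carrier FG" using e0(3) pz(2) by (simp_all add: cyc_red_carrier)
  define e where "e = inv\<^bsub>FG\<^esub> p \<otimes>\<^bsub>FG\<^esub> e0 \<otimes>\<^bsub>FG\<^esub> p"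
  have ec: "e \<in> carrier FG" using pz e0c by (simp add: e_def)
  have epow: "e [^]\<^bsub>FG\<^esub> (i::int) = inv\<^bsub>FG\<^esub> p \<otimes>\<^bsub>FG\<^esub> e0 [^]\<^bsub>FG\<^esub> i \<otimes>\<^bsub>FG\<^esub> p" for i
    unfolding e_def by (rule fg.conj_int_pow[OF pz(1) e0c])
  have "X = e [^]\<^bsub>FG\<^esub> (int m)" using pz(3) e0 epow cyc_red_int_pow by metis
  moreover have "\<forall>n::nat. n \<noteq> 0 \<longrightarrow> e [^]\<^bsub>FG\<^esub> n \<noteq> \<one>\<^bsub>FG\<^esub>"
    using fg.conj_pow_eq_one_iff[OF pz(1) e0c] cyc_red_infinite_order[OF e0(3)] by (simp add: e_def)
  moreover have "\<exists>j::int. y = e [^]\<^bsub>FG\<^esub> j"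
    if yc: "y \<in> carrier FG" and cm: "y \<otimes>\<^bsub>FG\<^esub> X = X \<otimes>\<^bsub>FG\<^esub> y" for y
  proof -
    define y0 where "y0 = p \<otimes>\<^bsub>FG\<^esub> y \<otimes>\<^bsub>FG\<^esub> inv\<^bsub>FG\<^esub> p"
    have y0c: "y0 \<in> carrier FG" using yc pz by (simp add: y0_def)
    have "z = p \<otimes>\<^bsub>FG\<^esub> X \<otimes>\<^bsub>FG\<^esub> inv\<^bsub>FG\<^esub> p" using pz zc by (simp add: fg.m_assoc)
    then have "y0 \<otimes>\<^bsub>FG\<^esub> z = z \<otimes>\<^bsub>FG\<^esub> y0"
      unfolding y0_def using fg.conj_commute[OF pz(1) yc X(1) cm] by simp
    then obtain j :: int where y0j: "y0 = e0 [^]\<^bsub>FG\<^esub> j"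
      using C0 y0c by (auto simp: free_group_simps)
    have "y = inv\<^bsub>FG\<^esub> p \<otimes>\<^bsub>FG\<^esub> y0 \<otimes>\<^bsub>FG\<^esub> p" using yc pz(1) by (simp add: y0_def fg.m_assoc)
    then show ?thesis using epow y0j by auto
  qed
  ultimately show ?thesis using ec by blast
qed

interpretation fg_cc: cyclic_centralizers "free_group UNIV"
  by unfold_locales (rule free_group_cyclic_centralizer)


section \<open>Values of words under a homomorphism into FG\<close>

lemma conj_S0_words: "R \<subseteq> words_on S \<Longrightarrow> conj_S0 S R \<subseteq> words_on S"
  unfolding conj_S0_def by (auto simp del: append_Cons append_Nil)

lemma comm_set_words: "A \<subseteq> words_on S \<Longrightarrow> B \<subseteq> words_on S \<Longrightarrow> comm_set A B \<subseteq> words_on S"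
  by (auto simp: comm_set_def commutator_word_def)

locale word_hom =
  fixes S :: "'a set" and \<phi> :: "'a word \<Rightarrow> 'b word"
  assumes hom: "\<phi> \<in> hom (free_group S) FG"
begin

definition val :: "'a word \<Rightarrow> 'b word" where
  "val w = \<phi> (reduce w)"

definition kills :: "'a word set \<Rightarrow> bool" where
  "kills A \<longleftrightarrow> (\<forall>w\<in>A. val w = \<one>\<^bsub>FG\<^esub>)"

lemma group_hom: "group_hom (free_group S) FG \<phi>"
  using hom by (simp add: group_hom_def group_hom_axioms_def group_free_group)

lemma reduce_carrier: "u \<in> words_on S \<Longrightarrow> reduce u \<in> carrier (free_group S)"
  by (simp add: free_group_simps words_on_reduce)

lemma val_closed [simp]: "u \<in> words_on S \<Longrightarrow> val u \<in> carrier FG"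
  unfolding val_def using group_hom.hom_closed[OF group_hom reduce_carrier] by blast

lemma val_Nil [simp]: "val [] = \<one>\<^bsub>FG\<^esub>"
  unfolding val_def using group_hom.hom_one[OF group_hom] by (simp add: free_group_simps reduce_def)

lemma val_append: "u \<in> words_on S \<Longrightarrow> v \<in> words_on S \<Longrightarrow> val (u @ v) = val u \<otimes>\<^bsub>FG\<^esub> val v"
  unfolding val_def
  using group_hom.hom_mult[OF group_hom reduce_carrier reduce_carrier]
  by (simp add: free_group_simps reduce_append_left reduce_append_right)

lemma val_inv: "u \<in> words_on S \<Longrightarrow> val (inv_word u) = inv\<^bsub>FG\<^esub> (val u)"
  unfolding val_def
  using group_hom.hom_inv[OF group_hom reduce_carrier] inv_free_group[OF reduce_carrier]
  by (simp add: reduce_inv)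

lemma val_inv_letter: "s \<in> S \<Longrightarrow> val [(s, False)] = inv\<^bsub>FG\<^esub> (val [(s, True)])"
  using val_inv[of "[(s, True)]"] by simp

lemma val_commutator_eq_one:
  "u \<in> words_on S \<Longrightarrow> v \<in> words_on S \<Longrightarrow>
   val (commutator_word u v) = \<one>\<^bsub>FG\<^esub> \<longleftrightarrow> val u \<otimes>\<^bsub>FG\<^esub> val v = val v \<otimes>\<^bsub>FG\<^esub> val u"
  by (simp add: commutator_word_def val_append val_inv fg.commutator_eq_one_iff)

lemma val_conj:
  "s \<in> S \<Longrightarrow> r \<in> words_on S \<Longrightarrow>
   val ([(s, False)] @ r @ [(s, True)]) = inv\<^bsub>FG\<^esub> (val [(s, True)]) \<otimes>\<^bsub>FG\<^esub> val r \<otimes>\<^bsub>FG\<^esub> val [(s, True)]"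
  by (simp add: val_append val_inv_letter fg.m_assoc del: append_Cons append_Nil)

lemma commute_image:
  assumes c: "c \<in> carrier FG"
    and gens: "\<And>s. s \<in> S \<Longrightarrow> val [(s, True)] \<otimes>\<^bsub>FG\<^esub> c = c \<otimes>\<^bsub>FG\<^esub> val [(s, True)]"
  shows "w \<in> words_on S \<Longrightarrow> val w \<otimes>\<^bsub>FG\<^esub> c = c \<otimes>\<^bsub>FG\<^esub> val w"
proof (induct w)
  case Nil
  then show ?case using c by simp
next
  case (Cons x w)
  obtain s b where x: "x = (s, b)" by (cases x)
  have s: "s \<in> S" and w: "w \<in> words_on S" using Cons.prems x by (auto simp: words_on_def)
  have cx: "val [x] \<otimes>\<^bsub>FG\<^esub> c = c \<otimes>\<^bsub>FG\<^esub> val [x]"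
  proof (cases b)
    case True
    then show ?thesis using gens s x by simp
  next
    case False
    then show ?thesis
      using fg.commute_inv[OF c val_closed gens[OF s, symmetric]] s x by (simp add: val_inv_letter)
  qed
  have xc: "val [x] \<in> carrier FG" and wc: "val w \<in> carrier FG" using s w x by simp_all
  have "val (x # w) \<otimes>\<^bsub>FG\<^esub> c = val [x] \<otimes>\<^bsub>FG\<^esub> (val w \<otimes>\<^bsub>FG\<^esub> c)"
    using val_append[of "[x]" w] s w x xc wc c by (simp add: fg.m_assoc)
  also have "\<dots> = (val [x] \<otimes>\<^bsub>FG\<^esub> c) \<otimes>\<^bsub>FG\<^esub> val w"
    using Cons.hyps[OF w] xc wc c by (simp add: fg.m_assoc)
  also have "\<dots> = c \<otimes>\<^bsub>FG\<^esub> val (x # w)"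
    using cx val_append[of "[x]" w] s w x xc wc c by (simp add: fg.m_assoc)
  finally show ?case .
qed

text \<open>Each
  generator commutes with g = val r by the conjugate lemma, hence every value
  commutes with g, and transitivity of commutation finishes the argument.\<close>
lemma abelian_image:
  assumes X: "X \<in> carrier FG" "X \<noteq> \<one>\<^bsub>FG\<^esub>" and r: "r \<in> words_on S" "val r \<noteq> \<one>\<^bsub>FG\<^esub>"
    and cm: "\<And>u. u \<in> conj_S0 S {r} \<Longrightarrow> val u \<otimes>\<^bsub>FG\<^esub> X = X \<otimes>\<^bsub>FG\<^esub> val u"
    and xy: "x \<in> words_on S" "y \<in> words_on S"
  shows "val x \<otimes>\<^bsub>FG\<^esub> val y = val y \<otimes>\<^bsub>FG\<^esub> val x"
proof -
  define g where "g = val r"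
  have gc: "g \<in> carrier FG" using r by (simp add: g_def)
  have gX: "g \<otimes>\<^bsub>FG\<^esub> X = X \<otimes>\<^bsub>FG\<^esub> g" using cm by (simp add: g_def conj_S0_def)
  have "val [(s, True)] \<otimes>\<^bsub>FG\<^esub> g = g \<otimes>\<^bsub>FG\<^esub> val [(s, True)]" if s: "s \<in> S" for s
  proof -
    define a where "a = val [(s, True)]"
    have ac: "a \<in> carrier FG" using s by (simp add: a_def)
    have "[(s, False)] @ r @ [(s, True)] \<in> conj_S0 S {r}" using s by (auto simp: conj_S0_def)
    then have "val ([(s, False)] @ r @ [(s, True)]) \<otimes>\<^bsub>FG\<^esub> X = X \<otimes>\<^bsub>FG\<^esub> val ([(s, False)] @ r @ [(s, True)])"
      by (rule cm)
    then have "(inv\<^bsub>FG\<^esub> a \<otimes>\<^bsub>FG\<^esub> g \<otimes>\<^bsub>FG\<^esub> a) \<otimes>\<^bsub>FG\<^esub> X = X \<otimes>\<^bsub>FG\<^esub> (inv\<^bsub>FG\<^esub> a \<otimes>\<^bsub>FG\<^esub> g \<otimes>\<^bsub>FG\<^esub> a)"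
      by (simp only: val_conj[OF s r(1)] a_def g_def)
    then have "g \<otimes>\<^bsub>FG\<^esub> (inv\<^bsub>FG\<^esub> a \<otimes>\<^bsub>FG\<^esub> g \<otimes>\<^bsub>FG\<^esub> a) = (inv\<^bsub>FG\<^esub> a \<otimes>\<^bsub>FG\<^esub> g \<otimes>\<^bsub>FG\<^esub> a) \<otimes>\<^bsub>FG\<^esub> g"
      using fg_cc.commute_trans[OF X gc _ gX] ac gc by simp
    then show ?thesis using fg_cc.commutes_with_conjugate[OF gc _ ac] r(2) by (simp add: a_def g_def)
  qed
  then have "val w \<otimes>\<^bsub>FG\<^esub> g = g \<otimes>\<^bsub>FG\<^esub> val w" if "w \<in> words_on S" for w
    using commute_image[OF gc _ that] by blast
  then show ?thesis using fg_cc.commute_trans[OF gc _ val_closed val_closed] r(2) xy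
    by (simp add: g_def)
qed

lemma kills_conj_S0:
  assumes "R \<subseteq> words_on S" "kills R"
  shows "kills (conj_S0 S R)"
  using assms val_conj by (auto simp: kills_def conj_S0_def simp del: append_Cons append_Nil)

lemma kills_comm_set:
  assumes R: "R \<subseteq> words_on S" and B: "B \<subseteq> words_on S"
    and nonab: "\<exists>x\<in>carrier (free_group S). \<exists>y\<in>carrier (free_group S).
                  \<phi> x \<otimes>\<^bsub>FG\<^esub> \<phi> y \<noteq> \<phi> y \<otimes>\<^bsub>FG\<^esub> \<phi> x"
  shows "kills (comm_set (conj_S0 S R) B) \<longleftrightarrow> kills R \<or> kills B"
proof
  assume all: "kills (comm_set (conj_S0 S R) B)"
  show "kills R \<or> kills B"
  proof (rule ccontr)
    assume "\<not> (kills R \<or> kills B)"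
    then obtain r w where r: "r \<in> R" "val r \<noteq> \<one>\<^bsub>FG\<^esub>" and w: "w \<in> B" "val w \<noteq> \<one>\<^bsub>FG\<^esub>"
      by (auto simp: kills_def)
    have wS: "w \<in> words_on S" and rS: "r \<in> words_on S" using R B r w by auto
    have "val u \<otimes>\<^bsub>FG\<^esub> val w = val w \<otimes>\<^bsub>FG\<^esub> val u" if u: "u \<in> conj_S0 S {r}" for u
    proof -
      have "u \<in> conj_S0 S R" using u r by (auto simp: conj_S0_def)
      then have "val (commutator_word u w) = \<one>\<^bsub>FG\<^esub>"
        using all w by (auto simp: kills_def comm_set_def)
      moreover have "u \<in> words_on S" using conj_S0_words[of "{r}" S] rS u by blast
      ultimately show ?thesis using val_commutator_eq_one wS by blast
    qed
    then have abelian: "val x \<otimes>\<^bsub>FG\<^esub> val y = val y \<otimes>\<^bsub>FG\<^esub> val x"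
      if "x \<in> words_on S" "y \<in> words_on S" for x y
      using abelian_image[OF val_closed[OF wS] w(2) rS r(2)] that by blast
    obtain x y where "x \<in> carrier (free_group S)" "y \<in> carrier (free_group S)"
      "\<phi> x \<otimes>\<^bsub>FG\<^esub> \<phi> y \<noteq> \<phi> y \<otimes>\<^bsub>FG\<^esub> \<phi> x" using nonab by blast
    then show False using abelian[of x y] by (auto simp: free_group_simps val_def reduce_reduced)
  qed
next
  assume trivial: "kills R \<or> kills B"
  show "kills (comm_set (conj_S0 S R) B)"
    unfolding kills_def comm_set_def
  proof clarify
    fix u v assume u: "u \<in> conj_S0 S R" and v: "v \<in> B"
    have uS: "u \<in> words_on S" and vS: "v \<in> words_on S" using u v conj_S0_words[OF R] B by auto
    have "val u = \<one>\<^bsub>FG\<^esub> \<or> val v = \<one>\<^bsub>FG\<^esub>"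
      using trivial u v kills_conj_S0[OF R] by (auto simp: kills_def)
    then show "val (commutator_word u v) = \<one>\<^bsub>FG\<^esub>"
      using val_commutator_eq_one[OF uS vS] uS vS by auto
  qed
qed

lemma kills_nested_comm:
  assumes words: "\<forall>i\<in>{1..n}. R i \<subseteq> words_on S"
    and nonab: "\<exists>x\<in>carrier (free_group S). \<exists>y\<in>carrier (free_group S).
                  \<phi> x \<otimes>\<^bsub>FG\<^esub> \<phi> y \<noteq> \<phi> y \<otimes>\<^bsub>FG\<^esub> \<phi> x"
  shows "1 \<le> k \<Longrightarrow> k \<le> n \<Longrightarrow>
    nested_comm S R k \<subseteq> words_on S \<and> (kills (nested_comm S R k) \<longleftrightarrow> (\<exists>i\<in>{1..k}. kills (R i)))"
proof (induct k)
  case (Suc k)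
  show ?case
  proof (cases "k = 0")
    case True
    then show ?thesis using words Suc.prems by auto
  next
    case False
    then obtain k' where k': "k = Suc k'" by (cases k) auto
    have R: "R (Suc k) \<subseteq> words_on S" using words Suc.prems by auto
    have IH: "nested_comm S R k \<subseteq> words_on S"
      "kills (nested_comm S R k) \<longleftrightarrow> (\<exists>i\<in>{1..k}. kills (R i))"
      using Suc False by auto
    have nested: "nested_comm S R (Suc k) = comm_set (conj_S0 S (R (Suc k))) (nested_comm S R k)"
      using k' by simp
    have "{1..Suc k} = insert (Suc k) {1..k}" by auto
    then show ?thesis
      unfolding nested using kills_comm_set[OF R IH(1) nonab] IH(2)
        comm_set_words[OF conj_S0_words[OF R] IH(1)] by auto
  qed
qed simp

end

text \<open>The main theorem is the case k = n of the previous lemma.\<close>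
theorem mainTheorem10:
  fixes S :: "'a set" and n :: nat and R :: "nat \<Rightarrow> 'a word set"
    and \<phi> :: "'a word \<Rightarrow> 'b word"
  assumes "finite S" and "n \<ge> 2"
    and "\<forall>i\<in>{1..n}. finite (R i) \<and> R i \<subseteq> words_on S"
    and "\<phi> \<in> hom (free_group S) (free_group (UNIV :: 'b set))"
    and "\<exists>a b :: 'b. a \<noteq> b"
    and "\<exists>x\<in>carrier (free_group S). \<exists>y\<in>carrier (free_group S).
           \<phi> x \<otimes>\<^bsub>free_group (UNIV :: 'b set)\<^esub> \<phi> y \<noteq> \<phi> y \<otimes>\<^bsub>free_group (UNIV :: 'b set)\<^esub> \<phi> x"
  shows "(\<forall>r\<in>nested_comm S R n. \<phi> (reduce r) = \<one>\<^bsub>free_group (UNIV :: 'b set)\<^esub>) \<longleftrightarrow>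
         (\<exists>i\<in>{1..n}. \<forall>r\<in>R i. \<phi> (reduce r) = \<one>\<^bsub>free_group (UNIV :: 'b set)\<^esub>)"
proof -
  interpret word_hom S \<phi> using assms(4) by unfold_locales
  have "\<forall>i\<in>{1..n}. R i \<subseteq> words_on S" using assms(3) by blast
  from kills_nested_comm[OF this assms(6), of n] assms(2)
  show ?thesis by (simp add: kills_def val_def)
qed

end
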